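(* Let $N$ be a positive even integer, $\alpha>0$, and let $\Phi:[0,1]^2\times(\mathbb{R}^2\setminus\{0\})\to\mathbb{R}$ be homogeneous of degree one in $\xi$. Let $\hat\xi_\ell$ be a unit vector, let $W_\ell$ be the set of $\xi$ in the square $[-\frac N2,\frac N2-1]^2$ whose angle with $\hat\xi_\ell$ is at most $\frac{\alpha}{\sqrt N}$, and let $\Phi_\ell(x,\xi)=\Phi(x,\xi)-\nabla_\xi\Phi(x,\hat\xi_\ell)\cdot\xi$. Assume $\Phi_\ell(x,\xi)$ is measurable in $x$ and $(Q,R)$-analytic in $\xi$ for some constants $Q,R>0$, and that $\alpha$ is admissible in the sense that $$\alpha<\min\Big\{\frac{R\sqrt N}{2},\ \frac{R}{\sqrt{\sqrt2\,Q}}\Big\}.$$ Then for every $p>\frac{2}{\log_2\left(\frac{R\sqrt N}{\alpha}\right)}$ there is a constant $C_p>0$, not depending on $\epsilon$, such that for all $0<\epsilon\le1$ the $\epsilon$-separation rank of $e^{2\pi i\Phi_\ell(x,\xi)}$ for $x\in[0,1]^2$, $\xi\in W_\ell$ obeys $r_\epsilon\le C_p\,\epsilon^{-p}$.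
   Context: A function $F(x,\xi)$ is called $(Q,R)$-analytic in $\xi$ if for each $x$ it is real-analytic in $\xi\neq0$ and, with $\theta=\arg\xi$, $2\pi\sup_{|\xi|=1}|\partial_\theta^kF(x,\xi)|\le Q\,k!\,R^{-k}$ for all integers $k\ge0$. For a function $f(x,\xi)$ on a product domain $D_1\times D_2$ and $\epsilon>0$, the $\epsilon$-separation rank is the smallest integer $r_\epsilon$ for which there exist functions $c_n$ on $D_1$, $d_n$ on $D_2$ ($0\le n\le r_\epsilon-1$) with $|f(x,\xi)-\sum_{n=0}^{r_\epsilon-1}c_n(x)d_n(\xi)|\le\epsilon$ for all $(x,\xi)\in D_1\times D_2$. *)

theory Defs
  imports "HOL-Analysis.Analysis"
begin

definition real_analytic_on2 :: "(real \<times> real \<Rightarrow> real) \<Rightarrow> (real \<times> real) set \<Rightarrow> bool" where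
  "real_analytic_on2 F U \<longleftrightarrow>
     (\<forall>a\<in>U. \<exists>c :: nat \<Rightarrow> nat \<Rightarrow> real. \<exists>r>0. \<forall>z\<in>ball a r.
        ((\<lambda>(i, j). c i j * (fst z - fst a) ^ i * (snd z - snd a) ^ j) has_sum F z) UNIV)"

text \<open>With theta = arg xi,
  the theta-derivatives on the unit circle are derivatives of
  theta -> F x (cos theta, sin theta); "2 pi sup |...| <= bound" is written pointwise.\<close>
definition QR_analytic ::
  "('a \<Rightarrow> real \<times> real \<Rightarrow> real) \<Rightarrow> 'a set \<Rightarrow> real \<Rightarrow> real \<Rightarrow> bool" where
  "QR_analytic F D Q R \<longleftrightarrow>
     (\<forall>x\<in>D. real_analytic_on2 (F x) (- {0}) \<and>
        (\<forall>k::nat. \<forall>\<theta>::real.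
           2 * pi * \<bar>(deriv ^^ k) (\<lambda>t. F x (cos t, sin t)) \<theta>\<bar> \<le> Q * fact k / R ^ k))"

definition sep_rank ::
  "('a \<Rightarrow> 'b \<Rightarrow> complex) \<Rightarrow> 'a set \<Rightarrow> 'b set \<Rightarrow> real \<Rightarrow> nat" where
  "sep_rank f D1 D2 \<epsilon> =
     (LEAST r. \<exists>c :: nat \<Rightarrow> 'a \<Rightarrow> complex. \<exists>d :: nat \<Rightarrow> 'b \<Rightarrow> complex.
        \<forall>x\<in>D1. \<forall>\<xi>\<in>D2. cmod (f x \<xi> - (\<Sum>n<r. c n x * d n \<xi>)) \<le> \<epsilon>)"

definition vec_angle :: "real \<times> real \<Rightarrow> real \<times> real \<Rightarrow> real" where
  "vec_angle u v = arccos ((u \<bullet> v) / (norm u * norm v))"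

definition wedge :: "nat \<Rightarrow> real \<Rightarrow> real \<times> real \<Rightarrow> (real \<times> real) set" where
  "wedge N \<alpha> \<xi>h =
     {\<xi>. \<xi> \<in> {- real N / 2 .. real N / 2 - 1} \<times> {- real N / 2 .. real N / 2 - 1}
        \<and> \<xi> \<noteq> 0 \<and> vec_angle \<xi> \<xi>h \<le> \<alpha> / sqrt (real N)}"

end

theory Submission
  imports Defs "HOL-Complex_Analysis.Complex_Analysis"
begin

(* Write \<xi> = |\<xi>| (cos \<phi>, sin \<phi>) with |\<phi> - \<theta>| \<le> pi, where \<xi>_l = (cos \<theta>, sin \<theta>).
   By homogeneity the phase is |\<xi>| h_x(\<phi>) with h_x(t) = \<Phi>_l(x, (cos t, sin t)), and on the
   wedge |\<phi> - \<theta>| \<le> \<alpha>/sqrt N < R/2.  Extending \<Phi>_l holomorphically along the circle shows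
   that h_x is smooth, so the Cauchy-type bounds on its derivatives make the degree-L Taylor
   polynomial P_x of h_x at \<theta> accurate to O(2^-L).  Replacing h_x by P_x and exp by its degree-L
   Taylor polynomial approximates exp(2 pi i \<Phi>_l) within O(2^-L) by
   \<Sum>_{j \<le> L} (2 pi i |\<xi>|)^j / j! P_x(\<phi> - \<theta>)^j, a sum of (L+1)(L^2+1) separated terms.
   Hence r_\<epsilon> = O(log(1/\<epsilon>)^3), which is below C_p \<epsilon>^-p for every p > 0. *)

definition sep_approx ::
  "('a \<Rightarrow> 'b \<Rightarrow> complex) \<Rightarrow> 'a set \<Rightarrow> 'b set \<Rightarrow> real \<Rightarrow> nat \<Rightarrow> bool" where
  "sep_approx f D1 D2 \<epsilon> r \<longleftrightarrow>
     (\<exists>c :: nat \<Rightarrow> 'a \<Rightarrow> complex. \<exists>d :: nat \<Rightarrow> 'b \<Rightarrow> complex.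
        \<forall>x\<in>D1. \<forall>\<xi>\<in>D2. cmod (f x \<xi> - (\<Sum>n<r. c n x * d n \<xi>)) \<le> \<epsilon>)"

lemma sep_rank_le: "sep_approx f D1 D2 \<epsilon> r \<Longrightarrow> sep_rank f D1 D2 \<epsilon> \<le> r"
  unfolding sep_rank_def sep_approx_def by (rule Least_le)

lemma sep_approx_mono:
  assumes "sep_approx f D1 D2 \<epsilon> r" "\<epsilon> \<le> \<epsilon>'" "r \<le> r'"
  shows "sep_approx f D1 D2 \<epsilon>' r'"
proof -
  obtain c d where cd: "\<And>x \<xi>. x \<in> D1 \<Longrightarrow> \<xi> \<in> D2 \<Longrightarrow> cmod (f x \<xi> - (\<Sum>n<r. c n x * d n \<xi>)) \<le> \<epsilon>"
    using assms(1) unfolding sep_approx_def by blast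
  define c' where "c' n = (if n < r then c n else (\<lambda>_. 0))" for n
  have "(\<Sum>n<r'. c' n x * d n \<xi>) = (\<Sum>n<r. c n x * d n \<xi>)" for x \<xi>
    using assms(3) by (intro sum.mono_neutral_cong_right) (auto simp: c'_def)
  then have "cmod (f x \<xi> - (\<Sum>n<r'. c' n x * d n \<xi>)) \<le> \<epsilon>'" if "x \<in> D1" "\<xi> \<in> D2" for x \<xi>
    using cd[OF that] assms(2) by simp
  then show ?thesis
    unfolding sep_approx_def by blast
qed

lemma has_real_derivative_of_real_restriction:
  fixes G :: "complex \<Rightarrow> complex" and h :: "real \<Rightarrow> real"
  assumes G: "(G has_field_derivative D) (at (of_real t))"
    and T: "open T" "t \<in> T"
    and agree: "\<And>s. s \<in> T \<Longrightarrow> G (of_real s) = of_real (h s)"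
  shows "(h has_real_derivative Re D) (at t)" "Im D = 0"
proof -
  have "((\<lambda>s. G (of_real s)) has_vector_derivative D) (at t)"
    using G by (rule has_vector_derivative_real_field)
  then have hD: "((\<lambda>s. complex_of_real (h s)) has_vector_derivative D) (at t)"
    by (rule has_vector_derivative_transform_within_open[OF _ T]) (simp add: agree)
  from has_field_derivative_Re[OF hD] show "(h has_real_derivative Re D) (at t)"
    by simp
  from has_field_derivative_Im[OF hD] have "((\<lambda>s. 0) has_real_derivative Im D) (at t)"
    by simp
  then show "Im D = 0"
    using DERIV_const DERIV_unique by blast
qed

context
  fixes G :: "complex \<Rightarrow> complex" and h :: "real \<Rightarrow> real" and S :: "complex set"
  assumes holo: "G holomorphic_on S" and S: "open S"
    and agree: "\<And>t. of_real t \<in> S \<Longrightarrow> G (of_real t) = of_real (h t)"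
begin

private lemma open_real_part: "open (complex_of_real -` S)"
  using S by (rule continuous_open_vimage) (simp add: continuous_at_imp_continuous_within isCont_of_real)

private lemma has_field_derivative_higher_deriv:
  "of_real t \<in> S \<Longrightarrow>
    ((deriv ^^ k) G has_field_derivative (deriv ^^ Suc k) G (of_real t)) (at (of_real t))"
  using holomorphic_higher_deriv[OF holo S, of k] S by (simp add: holomorphic_derivI)

lemma higher_deriv_of_real_restriction:
  "of_real t \<in> S \<Longrightarrow> (deriv ^^ k) G (of_real t) = of_real ((deriv ^^ k) h t)"
proof (induction k arbitrary: t)
  case 0
  then show ?case
    by (simp add: agree)
next
  case (Suc k)
  note restriction = has_real_derivative_of_real_restriction
    [OF has_field_derivative_higher_deriv[OF Suc.prems] open_real_part _ Suc.IH]
  have "deriv ((deriv ^^ k) h) t = Re ((deriv ^^ Suc k) G (of_real t))"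
    using restriction(1) Suc.prems by (auto intro: DERIV_imp_deriv)
  then show ?case
    using restriction(2) Suc.prems by (simp add: complex_eq_iff)
qed

lemma has_real_derivative_higher_deriv_of_real_restriction:
  assumes "of_real t \<in> S"
  shows "((deriv ^^ k) h has_real_derivative (deriv ^^ Suc k) h t) (at t)"
proof -
  have "((deriv ^^ k) h has_real_derivative Re ((deriv ^^ Suc k) G (of_real t))) (at t)"
    using has_real_derivative_of_real_restriction
      [OF has_field_derivative_higher_deriv[OF assms] open_real_part _ higher_deriv_of_real_restriction]
      assms by auto
  then show ?thesis
    using higher_deriv_of_real_restriction[OF assms, of "Suc k"] by simp
qed

end

lemma holomorphic_on_double_power_series:
  fixes c :: "nat \<Rightarrow> nat \<Rightarrow> complex" and u v :: "complex \<Rightarrow> complex"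
  assumes summable: "(\<lambda>(i, j). norm (c i j) * \<rho> ^ i * \<rho> ^ j) summable_on UNIV"
    and holo: "u holomorphic_on S" "v holomorphic_on S" and sub: "cball z s \<subseteq> S"
    and bound: "\<And>w. w \<in> cball z s \<Longrightarrow> norm (u w) \<le> \<rho> \<and> norm (v w) \<le> \<rho>"
  shows "(\<lambda>w. \<Sum>\<^sub>\<infinity>(i, j). c i j * u w ^ i * v w ^ j) holomorphic_on ball z s"
proof -
  define t where "t p w = (case p of (i, j) \<Rightarrow> c i j * u w ^ i * v w ^ j)" for p w
  have ulim: "uniform_limit (cball z s) (\<lambda>X w. \<Sum>p\<in>X. t p w) (\<lambda>w. \<Sum>\<^sub>\<infinity>p. t p w)
          (finite_subsets_at_top UNIV)"
  proof (rule Weierstrass_m_test_general[OF _ summable])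
    fix p w
    assume "w \<in> cball z s"
    with bound have "norm (u w) \<le> \<rho>" "norm (v w) \<le> \<rho>" "0 \<le> \<rho>"
      using norm_ge_zero order_trans by blast+
    then show "norm (t p w) \<le> (\<lambda>(i, j). norm (c i j) * \<rho> ^ i * \<rho> ^ j) p"
      by (cases p) (auto simp: t_def norm_mult norm_power intro!: mult_mono power_mono)
  qed
  have partial_sums: "continuous_on (cball z s) (\<lambda>w. \<Sum>p\<in>X. t p w) \<and>
      (\<lambda>w. \<Sum>p\<in>X. t p w) holomorphic_on ball z s" for X
  proof -
    have "(\<lambda>w. \<Sum>p\<in>X. t p w) holomorphic_on S"
      unfolding t_def split_beta using holo by (intro holomorphic_intros)
    then show ?thesis
      using sub ball_subset_cball
      by (meson holomorphic_on_imp_continuous_on holomorphic_on_subset continuous_on_subset)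
  qed
  show ?thesis
    unfolding t_def[symmetric]
    by (rule holomorphic_uniform_limit[OF always_eventually ulim])
      (use partial_sums finite_subsets_at_top_neq_bot in auto)
qed

lemma real_analytic_on2_square_series:
  assumes "real_analytic_on2 F U" "a \<in> U"
  obtains c \<rho> where "\<rho> > 0"
    "(\<lambda>(i, j). \<bar>c i j\<bar> * \<rho> ^ i * \<rho> ^ j) summable_on UNIV"
    "\<And>z. \<bar>fst z - fst a\<bar> \<le> \<rho> \<Longrightarrow> \<bar>snd z - snd a\<bar> \<le> \<rho> \<Longrightarrow>
       ((\<lambda>(i, j). c i j * (fst z - fst a) ^ i * (snd z - snd a) ^ j) has_sum F z) UNIV"
proof -
  obtain c r where "r > 0" and series: "\<And>z. z \<in> ball a r \<Longrightarrow>
      ((\<lambda>(i, j). c i j * (fst z - fst a) ^ i * (snd z - snd a) ^ j) has_sum F z) UNIV"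
    using assms unfolding real_analytic_on2_def by blast
  define \<rho> where "\<rho> = r / 2"
  have \<rho>: "\<rho> > 0"
    using \<open>r > 0\<close> by (simp add: \<rho>_def)
  have in_ball: "z \<in> ball a r" if "\<bar>fst z - fst a\<bar> \<le> \<rho>" "\<bar>snd z - snd a\<bar> \<le> \<rho>" for z
  proof -
    have "dist a z = sqrt ((fst z - fst a)\<^sup>2 + (snd z - snd a)\<^sup>2)"
      by (cases a, cases z) (simp add: dist_Pair_Pair dist_real_def power2_commute)
    also have "\<dots> \<le> sqrt (\<rho>\<^sup>2 + \<rho>\<^sup>2)"
      using that \<rho> by (intro real_sqrt_le_mono add_mono) (auto simp: abs_le_square_iff[symmetric])
    also have "\<dots> = sqrt 2 * \<rho>"
      using \<rho> by (simp add: real_sqrt_mult)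
    also have "\<dots> < r"
      using \<rho> sqrt2_less_2 by (simp add: \<rho>_def)
    finally show ?thesis
      by simp
  qed
  have "(fst a + \<rho>, snd a + \<rho>) \<in> ball a r"
    using \<rho> by (intro in_ball) auto
  from series[OF this] have "(\<lambda>(i, j). c i j * \<rho> ^ i * \<rho> ^ j) summable_on UNIV"
    by (simp add: has_sum_imp_summable)
  then have "(\<lambda>p. norm ((\<lambda>(i, j). c i j * \<rho> ^ i * \<rho> ^ j) p)) summable_on UNIV"
    by (rule summable_on_iff_abs_summable_on_real[THEN iffD1])
  also have "?this \<longleftrightarrow> (\<lambda>(i, j). \<bar>c i j\<bar> * \<rho> ^ i * \<rho> ^ j) summable_on UNIV"
    using \<rho> by (intro summable_on_cong) (auto simp: abs_mult)
  finally have summable: "(\<lambda>(i, j). \<bar>c i j\<bar> * \<rho> ^ i * \<rho> ^ j) summable_on UNIV" .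
  show ?thesis
    by (rule that[OF \<rho> summable]) (rule series[OF in_ball])
qed

lemma cos_sin_close_on_cball:
  assumes "\<rho> > 0"
  obtains s where "s > 0" "\<And>w. w \<in> cball (complex_of_real t) s \<Longrightarrow>
    norm (cos w - of_real (cos t)) \<le> \<rho> \<and> norm (sin w - of_real (sin t)) \<le> \<rho>"
proof -
  obtain d1 where "d1 > 0"
    and d1: "\<And>w :: complex. dist w (of_real t) < d1 \<Longrightarrow> dist (cos w) (cos (of_real t)) < \<rho>"
    using isCont_cos[of "complex_of_real t", unfolded continuous_at_eps_delta, rule_format, OF assms]
    by blast
  obtain d2 where "d2 > 0"
    and d2: "\<And>w :: complex. dist w (of_real t) < d2 \<Longrightarrow> dist (sin w) (sin (of_real t)) < \<rho>"
    using isCont_sin[of "complex_of_real t", unfolded continuous_at_eps_delta, rule_format, OF assms]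
    by blast
  have "norm (cos w - of_real (cos t)) \<le> \<rho> \<and> norm (sin w - of_real (sin t)) \<le> \<rho>"
    if "w \<in> cball (complex_of_real t) (min d1 d2 / 2)" for w
  proof -
    have "dist w (of_real t) < d1" "dist w (of_real t) < d2"
      using that \<open>d1 > 0\<close> \<open>d2 > 0\<close> by (auto simp: dist_commute)
    then have "dist (cos w) (cos (of_real t)) < \<rho>" "dist (sin w) (sin (of_real t)) < \<rho>"
      using d1 d2 by auto
    then show ?thesis
      by (simp add: dist_norm cos_of_real sin_of_real)
  qed
  moreover have "min d1 d2 / 2 > 0"
    using \<open>d1 > 0\<close> \<open>d2 > 0\<close> by simp
  ultimately show ?thesis
    using that by blast
qed

lemma real_analytic_on2_circle_smooth:
  assumes "real_analytic_on2 F (- {0})"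
  shows "((deriv ^^ k) (\<lambda>t. F (cos t, sin t)) has_real_derivative
           (deriv ^^ Suc k) (\<lambda>t. F (cos t, sin t)) t) (at t)"
proof -
  have on_circle: "(cos t, sin t) \<in> - {0}"
    by (simp add: prod_eq_iff) (metis sin_cos_squared_add zero_neq_one power2_eq_square mult_zero_left add_0)
  obtain c \<rho> where "\<rho> > 0"
    and summable: "(\<lambda>(i, j). \<bar>c i j\<bar> * \<rho> ^ i * \<rho> ^ j) summable_on UNIV"
    and series: "\<And>z. \<bar>fst z - cos t\<bar> \<le> \<rho> \<Longrightarrow> \<bar>snd z - sin t\<bar> \<le> \<rho> \<Longrightarrow>
       ((\<lambda>(i, j). c i j * (fst z - cos t) ^ i * (snd z - sin t) ^ j) has_sum F z) UNIV"
    using real_analytic_on2_square_series[OF assms on_circle, unfolded fst_conv snd_conv] by blast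
  obtain s where "s > 0" and near: "\<And>w. w \<in> cball (complex_of_real t) s \<Longrightarrow>
      norm (cos w - of_real (cos t)) \<le> \<rho> \<and> norm (sin w - of_real (sin t)) \<le> \<rho>"
    using cos_sin_close_on_cball[OF \<open>\<rho> > 0\<close>] by blast
  define G where "G w = (\<Sum>\<^sub>\<infinity>(i, j). complex_of_real (c i j) *
      (cos w - of_real (cos t)) ^ i * (sin w - of_real (sin t)) ^ j)" for w
  from summable have "(\<lambda>(i, j). norm (complex_of_real (c i j)) * \<rho> ^ i * \<rho> ^ j) summable_on UNIV"
    by simp
  then have "G holomorphic_on ball (of_real t) s"
    unfolding G_def by (rule holomorphic_on_double_power_series[OF _ _ _ subset_UNIV near])
      (intro holomorphic_intros)+
  moreover have "G (of_real \<tau>) = of_real (F (cos \<tau>, sin \<tau>))"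
    if "complex_of_real \<tau> \<in> ball (of_real t) s" for \<tau>
  proof -
    have "complex_of_real \<tau> \<in> cball (of_real t) s"
      using that by auto
    from near[OF this] have "\<bar>cos \<tau> - cos t\<bar> \<le> \<rho>" "\<bar>sin \<tau> - sin t\<bar> \<le> \<rho>"
      by (simp_all add: cos_of_real sin_of_real flip: of_real_diff)
    then have "((\<lambda>(i, j). c i j * (cos \<tau> - cos t) ^ i * (sin \<tau> - sin t) ^ j) has_sum F (cos \<tau>, sin \<tau>)) UNIV"
      using series[of "(cos \<tau>, sin \<tau>)"] by simp
    from has_sum_of_real[OF this, where 'a = complex] show ?thesis
      unfolding G_def by (intro infsumI) (simp add: cos_of_real sin_of_real case_prod_unfold)
  qed
  ultimately show ?thesis
    using has_real_derivative_higher_deriv_of_real_restriction[of G "ball (of_real t) s"] \<open>s > 0\<close>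
    by auto
qed

lemma Taylor_remainder_le_geometric:
  fixes h :: "real \<Rightarrow> real"
  assumes smooth: "\<And>k t. ((deriv ^^ k) h has_real_derivative (deriv ^^ Suc k) h t) (at t)"
    and bound: "\<And>k t. \<bar>(deriv ^^ k) h t\<bar> \<le> A * fact k / R ^ k"
    and R: "R > 0" and x: "\<bar>x - c\<bar> \<le> R / 2" and K: "K > 0"
  shows "\<bar>h x - (\<Sum>m<K. (deriv ^^ m) h c / fact m * (x - c) ^ m)\<bar> \<le> A / 2 ^ K"
proof -
  have A: "A \<ge> 0"
    using bound[of 0 0] by simp
  show ?thesis
  proof (cases "x = c")
    case True
    then have "(\<Sum>m<K. (deriv ^^ m) h c / fact m * (x - c) ^ m) = h c"
      using K by (cases K) (simp_all add: sum.lessThan_Suc_shift del: sum.lessThan_Suc)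
    with True A show ?thesis
      by simp
  next
    case False
    obtain t where "h x = (\<Sum>m<K. (deriv ^^ m) h c / fact m * (x - c) ^ m)
        + (deriv ^^ K) h t / fact K * (x - c) ^ K"
      using Taylor[where diff = "\<lambda>m. (deriv ^^ m) h" and a = "min x c" and b = "max x c",
          OF K _ _ _ _ _ _ False]
        smooth by force
    then have "\<bar>h x - (\<Sum>m<K. (deriv ^^ m) h c / fact m * (x - c) ^ m)\<bar>
        = \<bar>(deriv ^^ K) h t\<bar> / fact K * \<bar>x - c\<bar> ^ K"
      by (simp add: abs_mult power_abs)
    also have "\<dots> \<le> (A * fact K / R ^ K) / fact K * (R / 2) ^ K"
      using bound x A R by (intro mult_mono divide_right_mono power_mono) auto
    also have "\<dots> = A / 2 ^ K"
      using R by (simp add: power_divide)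
    finally show ?thesis .
  qed
qed

lemma pow_div_fact_le_exp:
  fixes x :: real
  assumes "0 \<le> x"
  shows "x ^ n / fact n \<le> exp x"
proof -
  have series: "(\<lambda>n. x ^ n / fact n) sums exp x"
    using exp_converges[of x] by (simp add: field_simps)
  have "(\<Sum>m\<in>{n}. x ^ m / fact m) \<le> (\<Sum>m. x ^ m / fact m)"
    by (rule sum_le_suminf[OF sums_summable[OF series]]) (use assms in auto)
  then show ?thesis
    using sums_unique[OF series] by simp
qed

lemma norm_exp_minus_Taylor_le:
  fixes z :: complex
  assumes "norm z \<le> B"
  shows "norm (exp z - (\<Sum>i\<le>L. z ^ i / fact i)) \<le> B * exp (3 * B) / 2 ^ L"
proof -
  have B: "0 \<le> B"
    using assms norm_ge_zero order_trans by blast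
  have "2 ^ L * (B ^ L / fact L) \<le> exp (2 * B)"
    using pow_div_fact_le_exp[of "2 * B" L] B by (simp add: power_mult_distrib)
  then have geometric: "B ^ L / fact L \<le> exp (2 * B) / 2 ^ L"
    by (simp add: pos_le_divide_eq mult.commute)
  have "norm (exp z - (\<Sum>i\<le>L. z ^ i / fact i)) \<le> exp (norm z) * norm z ^ Suc L / fact L"
    by (rule Taylor_exp_field)
  also have "\<dots> \<le> exp B * B ^ Suc L / fact L"
    using assms by (intro mult_mono divide_right_mono power_mono) auto
  also have "\<dots> = exp B * B * (B ^ L / fact L)"
    by simp
  also have "\<dots> \<le> exp B * B * (exp (2 * B) / 2 ^ L)"
    using B geometric by (intro mult_left_mono) auto
  also have "\<dots> = B * exp (3 * B) / 2 ^ L"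
    by (simp add: mult_exp_exp)
  finally show ?thesis .
qed

lemma norm_cis_diff_le: "cmod (cis a - cis b) \<le> \<bar>a - b\<bar>"
proof -
  have "cis a - cis b = cis b * (exp (\<i> * complex_of_real (a - b)) - 1)"
    by (simp add: cis_conv_exp algebra_simps flip: exp_add)
  then have "cmod (cis a - cis b) = 2 * \<bar>sin ((a - b) / 2)\<bar>"
    using dist_exp_i_1[of "a - b"] by (simp add: norm_mult)
  also have "\<dots> \<le> 2 * \<bar>(a - b) / 2\<bar>"
    using abs_sin_x_le_abs_x[of "(a - b) / 2"] by linarith
  finally show ?thesis
    by simp
qed

lemma norm_cis_minus_exp_Taylor_le:
  assumes \<rho>: "0 \<le> \<rho>" "\<rho> \<le> \<rho>max"
    and bound: "\<bar>u\<bar> \<le> Q / (2 * pi)" and approx: "\<bar>u - v\<bar> \<le> Q / (2 * pi) / 2 ^ L"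
  shows "cmod (cis (2 * pi * (\<rho> * u)) - (\<Sum>j\<le>L. (\<i> * of_real (2 * pi * \<rho> * v)) ^ j / fact j))
           \<le> (\<rho>max * Q + 2 * \<rho>max * Q * exp (6 * \<rho>max * Q)) / 2 ^ L"
proof -
  define z where "z = \<i> * of_real (2 * pi * \<rho> * v)"
  have "0 \<le> Q / (2 * pi)"
    using bound abs_ge_zero order_trans by blast
  then have Q: "0 \<le> Q"
    using pi_gt_zero by (auto simp: zero_le_divide_iff)
  have "cmod (cis (2 * pi * (\<rho> * u)) - exp z) \<le> \<bar>2 * pi * (\<rho> * u) - 2 * pi * \<rho> * v\<bar>"
    unfolding z_def cis_conv_exp[symmetric] by (rule norm_cis_diff_le)
  also have "\<dots> = 2 * pi * \<rho> * \<bar>u - v\<bar>"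
    using \<rho> by (simp add: abs_mult right_diff_distrib[symmetric] mult.assoc)
  also have "\<dots> \<le> 2 * pi * \<rho>max * (Q / (2 * pi) / 2 ^ L)"
    using \<rho> approx by (intro mult_mono) auto
  also have "\<dots> = \<rho>max * Q / 2 ^ L"
    by simp
  finally have phase_error: "cmod (cis (2 * pi * (\<rho> * u)) - exp z) \<le> \<rho>max * Q / 2 ^ L" .
  have "Q / (2 * pi) / 2 ^ L \<le> Q / (2 * pi)"
    using divide_left_mono[of 1 "2 ^ L" "Q / (2 * pi)"] Q by simp
  moreover have "Q / (2 * pi) + Q / (2 * pi) = Q / pi"
    by simp
  ultimately have "\<bar>v\<bar> \<le> Q / pi"
    using bound approx by linarith
  then have "pi * \<bar>v\<bar> \<le> Q"
    by (simp add: pos_le_divide_eq mult.commute)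
  then have "\<rho> * (pi * \<bar>v\<bar>) \<le> \<rho>max * Q"
    using \<rho> Q by (intro mult_mono) auto
  then have "norm z \<le> 2 * \<rho>max * Q"
    using \<rho> by (simp add: z_def norm_mult abs_mult mult_ac)
  then have "cmod (exp z - (\<Sum>j\<le>L. z ^ j / fact j)) \<le> 2 * \<rho>max * Q * exp (3 * (2 * \<rho>max * Q)) / 2 ^ L"
    by (rule norm_exp_minus_Taylor_le)
  also have "3 * (2 * \<rho>max * Q) = 6 * \<rho>max * Q"
    by simp
  finally have series_error:
    "cmod (exp z - (\<Sum>j\<le>L. z ^ j / fact j)) \<le> 2 * \<rho>max * Q * exp (6 * \<rho>max * Q) / 2 ^ L" .
  show ?thesis
    unfolding z_def[symmetric] add_divide_distrib
    using norm_triangle_ineq[of "cis (2 * pi * (\<rho> * u)) - exp z" "exp z - (\<Sum>j\<le>L. z ^ j / fact j)"]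
      phase_error series_error by simp
qed

lemma sum_poly_eq_separated_sum:
  fixes P :: "nat \<Rightarrow> 'c::comm_semiring_1 poly"
  assumes "\<And>j. j < M \<Longrightarrow> degree (P j) < D"
  shows "(\<Sum>j<M. w j * poly (P j) y) =
         (\<Sum>n<M * D. coeff (P (n div D)) (n mod D) * (w (n div D) * y ^ (n mod D)))"
proof -
  have "poly (P j) y = (\<Sum>l<D. coeff (P j) l * y ^ l)" if "j < M" for j
    unfolding poly_altdef using assms[OF that]
    by (intro sum.mono_neutral_left) (auto simp: coeff_eq_0)
  then have "(\<Sum>j<M. w j * poly (P j) y) = (\<Sum>j<M. \<Sum>l<D. coeff (P j) l * (w j * y ^ l))"
    by (simp add: sum_distrib_left mult.left_commute)
  also have "\<dots> = (\<Sum>n<M * D. coeff (P (n div D)) (n mod D) * (w (n div D) * y ^ (n mod D)))"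
    by (simp add: sum_mult_product)
  finally show ?thesis .
qed

definition Taylor_poly :: "(real \<Rightarrow> real) \<Rightarrow> real \<Rightarrow> nat \<Rightarrow> complex poly" where
  "Taylor_poly h c K = (\<Sum>k<K. monom (complex_of_real ((deriv ^^ k) h c / fact k)) k)"

lemma poly_Taylor_poly:
  "poly (Taylor_poly h c K) (of_real x) = of_real (\<Sum>k<K. (deriv ^^ k) h c / fact k * x ^ k)"
  by (simp add: Taylor_poly_def poly_sum poly_monom)

lemma degree_Taylor_poly: "degree (Taylor_poly h c K) \<le> K"
  unfolding Taylor_poly_def by (intro degree_sum_le) (auto intro: order_trans[OF degree_monom_le])

lemma norm_cis_minus_Taylor_polys_le:
  fixes h :: "real \<Rightarrow> real"
  assumes smooth: "\<And>k t. ((deriv ^^ k) h has_real_derivative (deriv ^^ Suc k) h t) (at t)"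
    and bound: "\<And>k t. 2 * pi * \<bar>(deriv ^^ k) h t\<bar> \<le> Q * fact k / R ^ k"
    and R: "R > 0" and \<rho>: "0 \<le> \<rho>" "\<rho> \<le> \<rho>max" and \<phi>: "\<bar>\<phi> - \<theta>\<bar> \<le> R / 2" and L: "L > 0"
  shows "cmod (cis (2 * pi * (\<rho> * h \<phi>)) - (\<Sum>j<L + 1. (\<i> * of_real (2 * pi * \<rho>)) ^ j / fact j *
             poly (Taylor_poly h \<theta> L ^ j) (of_real (\<phi> - \<theta>))))
           \<le> (\<rho>max * Q + 2 * \<rho>max * Q * exp (6 * \<rho>max * Q)) / 2 ^ L"
proof -
  define T where "T = (\<Sum>k<L. (deriv ^^ k) h \<theta> / fact k * (\<phi> - \<theta>) ^ k)"
  have "(\<Sum>j<L + 1. (\<i> * of_real (2 * pi * \<rho>)) ^ j / fact j * poly (Taylor_poly h \<theta> L ^ j) (of_real (\<phi> - \<theta>)))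
      = (\<Sum>j\<le>L. (\<i> * of_real (2 * pi * \<rho> * T)) ^ j / fact j)"
    by (simp add: T_def poly_power poly_Taylor_poly power_mult_distrib lessThan_Suc_atMost mult.assoc
        del: of_real_diff)
  moreover have "\<bar>h \<phi> - T\<bar> \<le> Q / (2 * pi) / 2 ^ L"
    unfolding T_def
  proof (rule Taylor_remainder_le_geometric[OF smooth _ R \<phi> L])
    show "\<bar>(deriv ^^ k) h t\<bar> \<le> Q / (2 * pi) * fact k / R ^ k" for k t
      using bound[of k t] R by (simp add: field_simps)
  qed
  moreover have "\<bar>h \<phi>\<bar> \<le> Q / (2 * pi)"
    using bound[of 0 \<phi>] by (simp add: field_simps)
  ultimately show ?thesis
    using norm_cis_minus_exp_Taylor_le[OF \<rho>, of "h \<phi>" Q T L] by (simp add: mult.assoc)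
qed

lemma sep_approx_cis_polar_phase:
  fixes F :: "'a \<Rightarrow> 'b \<Rightarrow> real" and h :: "'a \<Rightarrow> real \<Rightarrow> real" and \<rho> \<phi> :: "'b \<Rightarrow> real"
  assumes polar: "\<And>x \<xi>. x \<in> X \<Longrightarrow> \<xi> \<in> Y \<Longrightarrow> F x \<xi> = \<rho> \<xi> * h x (\<phi> \<xi>)"
    and smooth: "\<And>x k t. x \<in> X \<Longrightarrow>
      ((deriv ^^ k) (h x) has_real_derivative (deriv ^^ Suc k) (h x) t) (at t)"
    and bound: "\<And>x k t. x \<in> X \<Longrightarrow> 2 * pi * \<bar>(deriv ^^ k) (h x) t\<bar> \<le> Q * fact k / R ^ k"
    and "R > 0"
    and radius: "\<And>\<xi>. \<xi> \<in> Y \<Longrightarrow> 0 \<le> \<rho> \<xi> \<and> \<rho> \<xi> \<le> \<rho>max"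
    and angle: "\<And>\<xi>. \<xi> \<in> Y \<Longrightarrow> \<bar>\<phi> \<xi> - \<theta>\<bar> \<le> R / 2"
    and "L > 0"
  shows "sep_approx (\<lambda>x \<xi>. cis (2 * pi * F x \<xi>)) X Y
           ((\<rho>max * Q + 2 * \<rho>max * Q * exp (6 * \<rho>max * Q)) / 2 ^ L) ((L + 1) ^ 3)"
proof -
  define D where "D = L * L + 1"
  define P where "P x = Taylor_poly (h x) \<theta> L" for x
  define w where "w j \<xi> = (\<i> * complex_of_real (2 * pi * \<rho> \<xi>)) ^ j / fact j" for j \<xi>
  have degree_power: "degree (P x ^ j) < D" if "j < L + 1" for x j
    using degree_power_le[of "P x" j] mult_le_mono[OF degree_Taylor_poly[of "h x" \<theta> L], of j L] that
    by (simp add: D_def P_def)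
  have "sep_approx (\<lambda>x \<xi>. cis (2 * pi * F x \<xi>)) X Y
      ((\<rho>max * Q + 2 * \<rho>max * Q * exp (6 * \<rho>max * Q)) / 2 ^ L) ((L + 1) * D)"
    unfolding sep_approx_def
  proof (intro exI ballI)
    fix x \<xi>
    assume "x \<in> X" "\<xi> \<in> Y"
    have "(\<Sum>j<L + 1. w j \<xi> * poly (P x ^ j) (of_real (\<phi> \<xi> - \<theta>))) = (\<Sum>n<(L + 1) * D.
        coeff (P x ^ (n div D)) (n mod D) * (w (n div D) \<xi> * of_real (\<phi> \<xi> - \<theta>) ^ (n mod D)))"
      by (intro sum_poly_eq_separated_sum degree_power)
    moreover have "cmod (cis (2 * pi * F x \<xi>) - (\<Sum>j<L + 1. w j \<xi> * poly (P x ^ j) (of_real (\<phi> \<xi> - \<theta>))))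
        \<le> (\<rho>max * Q + 2 * \<rho>max * Q * exp (6 * \<rho>max * Q)) / 2 ^ L"
      unfolding polar[OF \<open>x \<in> X\<close> \<open>\<xi> \<in> Y\<close>] w_def P_def
      using radius[OF \<open>\<xi> \<in> Y\<close>]
      by (intro norm_cis_minus_Taylor_polys_le[OF smooth[OF \<open>x \<in> X\<close>] bound[OF \<open>x \<in> X\<close>] \<open>R > 0\<close>
            _ _ angle[OF \<open>\<xi> \<in> Y\<close>] \<open>L > 0\<close>]) auto
    ultimately show "cmod (cis (2 * pi * F x \<xi>) - (\<Sum>n<(L + 1) * D.
        coeff (P x ^ (n div D)) (n mod D) * (w (n div D) \<xi> * of_real (\<phi> \<xi> - \<theta>) ^ (n mod D))))
      \<le> (\<rho>max * Q + 2 * \<rho>max * Q * exp (6 * \<rho>max * Q)) / 2 ^ L"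
      by (simp only:)
  qed
  moreover have "(L + 1) * D \<le> (L + 1) ^ 3"
  proof -
    have "D \<le> (L + 1) ^ 2"
      by (simp add: D_def power2_eq_square algebra_simps)
    then have "(L + 1) * D \<le> (L + 1) * (L + 1) ^ 2"
      by (rule mult_le_mono2)
    then show ?thesis
      by (simp only: power3_eq_cube power2_eq_square mult.assoc)
  qed
  ultimately show ?thesis
    by (rule sep_approx_mono[OF _ order_refl])
qed

lemma log_power_le_powr:
  fixes a p :: real
  assumes "0 \<le> a" "0 < p"
  shows "\<exists>C>0. \<forall>\<epsilon>. 0 < \<epsilon> \<and> \<epsilon> \<le> 1 \<longrightarrow> (a + log 2 (1 / \<epsilon>)) ^ n \<le> C * \<epsilon> powr (- p)"
proof (intro exI conjI allI impI)
  define c where "c = p * ln 2"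
  have c: "c > 0"
    using assms by (simp add: c_def)
  then show "fact n * exp (c * a) / c ^ n > 0"
    by simp
  fix \<epsilon> :: real
  assume \<epsilon>: "0 < \<epsilon> \<and> \<epsilon> \<le> 1"
  define y where "y = log 2 (1 / \<epsilon>)"
  have "y \<ge> 0"
    using \<epsilon> by (simp add: y_def)
  then have "c ^ n * (a + y) ^ n / fact n \<le> exp (c * (a + y))"
    using pow_div_fact_le_exp[of "c * (a + y)" n] c assms by (simp add: power_mult_distrib)
  also have "\<dots> = exp (c * a) * exp (c * y)"
    by (simp add: distrib_left exp_add)
  finally have "c ^ n * (a + y) ^ n / fact n \<le> exp (c * a) * exp (c * y)" .
  moreover have "exp (c * y) = \<epsilon> powr (- p)"
    using \<epsilon> by (simp add: c_def y_def log_def powr_def ln_div)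
  ultimately show "(a + log 2 (1 / \<epsilon>)) ^ n \<le> fact n * exp (c * a) / c ^ n * \<epsilon> powr (- p)"
    using c by (simp add: y_def field_simps)
qed

lemma sep_rank_le_powr_of_geometric:
  assumes approx: "\<And>L. L > 0 \<Longrightarrow> sep_approx f D1 D2 (C / 2 ^ L) ((L + 1) ^ n)"
    and "p > 0"
  shows "\<exists>K>0. \<forall>\<epsilon>. 0 < \<epsilon> \<and> \<epsilon> \<le> 1 \<longrightarrow> real (sep_rank f D1 D2 \<epsilon>) \<le> K * \<epsilon> powr (- p)"
proof -
  define C1 where "C1 = max C 1"
  have C1: "C1 \<ge> 1"
    by (simp add: C1_def)
  then have "0 \<le> log 2 C1 + 3"
    by simp
  then obtain K where "K > 0" and K:
    "\<And>\<epsilon>. 0 < \<epsilon> \<and> \<epsilon> \<le> 1 \<Longrightarrow> (log 2 C1 + 3 + log 2 (1 / \<epsilon>)) ^ n \<le> K * \<epsilon> powr (- p)"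
    using log_power_le_powr \<open>p > 0\<close> by blast
  have "real (sep_rank f D1 D2 \<epsilon>) \<le> K * \<epsilon> powr (- p)" if \<epsilon>: "0 < \<epsilon> \<and> \<epsilon> \<le> 1" for \<epsilon>
  proof -
    define L where "L = nat \<lceil>log 2 (C1 / \<epsilon>)\<rceil> + 1"
    have log_nonneg: "log 2 (C1 / \<epsilon>) \<ge> 0"
      using C1 \<epsilon> by simp
    have "C1 / \<epsilon> = 2 powr (log 2 (C1 / \<epsilon>))"
      using C1 \<epsilon> by simp
    also have "\<dots> \<le> 2 powr real L"
      unfolding L_def by (intro powr_mono) linarith+
    also have "\<dots> = 2 ^ L"
      by (simp add: powr_realpow)
    finally have "C1 \<le> 2 ^ L * \<epsilon>"
      using \<epsilon> by (simp add: pos_divide_le_eq)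
    then have "C1 / 2 ^ L \<le> \<epsilon>"
      by (simp add: pos_divide_le_eq mult.commute)
    moreover have "C / 2 ^ L \<le> C1 / 2 ^ L"
      by (simp add: C1_def divide_right_mono)
    ultimately have "sep_approx f D1 D2 \<epsilon> ((L + 1) ^ n)"
      using approx[of L] sep_approx_mono[of f D1 D2 "C / 2 ^ L" "(L + 1) ^ n" \<epsilon>] by (simp add: L_def)
    then have "real (sep_rank f D1 D2 \<epsilon>) \<le> real ((L + 1) ^ n)"
      by (intro of_nat_mono sep_rank_le)
    also have "\<dots> = (real L + 1) ^ n"
      by (simp add: add.commute)
    also have "\<dots> \<le> (log 2 C1 + 3 + log 2 (1 / \<epsilon>)) ^ n"
    proof (rule power_mono)
      have "log 2 (C1 / \<epsilon>) = log 2 C1 + log 2 (1 / \<epsilon>)"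
        using C1 \<epsilon> by (simp add: log_divide)
      then show "real L + 1 \<le> log 2 C1 + 3 + log 2 (1 / \<epsilon>)"
        unfolding L_def using log_nonneg by linarith
    qed simp
    also have "\<dots> \<le> K * \<epsilon> powr (- p)"
      using K \<epsilon> by blast
    finally show ?thesis .
  qed
  with \<open>K > 0\<close> show ?thesis
    by blast
qed

lemma polar_angle_near:
  fixes \<xi> :: "real \<times> real"
  assumes "0 \<le> \<theta>" "\<theta> < 2 * pi"
  shows "\<exists>\<phi>. \<xi> = norm \<xi> *\<^sub>R (cos \<phi>, sin \<phi>) \<and> \<bar>\<phi> - \<theta>\<bar> \<le> pi"
proof (cases "\<xi> = 0")
  case True
  then show ?thesis
    by (intro exI[of _ \<theta>]) (simp add: zero_prod_def)
next
  case False
  define u where "u = \<xi> /\<^sub>R norm \<xi>"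
  have "norm u = 1"
    using False by (simp add: u_def)
  then have "(fst u)\<^sup>2 + (snd u)\<^sup>2 = 1"
    by (cases u) (simp add: norm_Pair)
  then obtain \<phi> where \<phi>: "0 \<le> \<phi>" "\<phi> < 2 * pi" "u = (cos \<phi>, sin \<phi>)"
    using sincos_total_2pi by (metis prod.collapse)
  have \<xi>: "\<xi> = norm \<xi> *\<^sub>R u"
    using False by (simp add: u_def)
  consider "\<bar>\<phi> - \<theta>\<bar> \<le> pi" | "\<phi> - \<theta> > pi" | "\<phi> - \<theta> < - pi"
    by linarith
  then show ?thesis
  proof cases
    case 1
    with \<xi> \<phi> show ?thesis
      by blast
  next
    case 2
    have "u = (cos (\<phi> - 2 * pi), sin (\<phi> - 2 * pi))" and "\<bar>\<phi> - 2 * pi - \<theta>\<bar> \<le> pi"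
      using \<phi> 2 assms by (simp_all add: cos_diff sin_diff)
    with \<xi> show ?thesis
      by blast
  next
    case 3
    have "u = (cos (\<phi> + 2 * pi), sin (\<phi> + 2 * pi))" and "\<bar>\<phi> + 2 * pi - \<theta>\<bar> \<le> pi"
      using \<phi> 3 assms by (simp_all add: cos_add sin_add)
    with \<xi> show ?thesis
      by blast
  qed
qed

lemma polar_angle_function:
  assumes "0 \<le> \<theta>" "\<theta> < 2 * pi"
  obtains \<phi> :: "real \<times> real \<Rightarrow> real"
  where "\<And>\<xi>. \<xi> = norm \<xi> *\<^sub>R (cos (\<phi> \<xi>), sin (\<phi> \<xi>))" "\<And>\<xi>. \<bar>\<phi> \<xi> - \<theta>\<bar> \<le> pi"
proof -
  have "\<forall>\<xi>. \<exists>\<phi>. \<xi> = norm \<xi> *\<^sub>R (cos \<phi>, sin \<phi>) \<and> \<bar>\<phi> - \<theta>\<bar> \<le> pi"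
    using polar_angle_near[OF assms] by blast
  from choice[OF this] obtain \<phi> where
    "\<forall>\<xi>. \<xi> = norm \<xi> *\<^sub>R (cos (\<phi> \<xi>), sin (\<phi> \<xi>)) \<and> \<bar>\<phi> \<xi> - \<theta>\<bar> \<le> pi"
    by blast
  with that show ?thesis
    by blast
qed

lemma homogeneous_minus_linear_polar:
  fixes f :: "real \<times> real \<Rightarrow> real"
  assumes hom: "\<And>\<xi> t. \<xi> \<noteq> 0 \<Longrightarrow> t > 0 \<Longrightarrow> f (t *\<^sub>R \<xi>) = t * f \<xi>"
    and "\<xi> \<noteq> 0" and polar: "\<xi> = norm \<xi> *\<^sub>R (cos \<phi>, sin \<phi>)"
  shows "f \<xi> - v \<bullet> \<xi> = norm \<xi> * (f (cos \<phi>, sin \<phi>) - v \<bullet> (cos \<phi>, sin \<phi>))"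
proof -
  define u where "u = (cos \<phi>, sin \<phi>)"
  have "norm \<xi> > 0"
    using \<open>\<xi> \<noteq> 0\<close> by simp
  have "u \<noteq> 0"
    by (simp add: u_def prod_eq_iff) (metis sin_cos_squared_add zero_neq_one power2_eq_square mult_zero_left add_0)
  have "f (norm \<xi> *\<^sub>R u) - v \<bullet> (norm \<xi> *\<^sub>R u) = norm \<xi> * (f u - v \<bullet> u)"
    by (simp only: hom[OF \<open>u \<noteq> 0\<close> \<open>norm \<xi> > 0\<close>] inner_scaleR_right right_diff_distrib)
  then show ?thesis
    unfolding u_def[symmetric] polar[folded u_def, symmetric] .
qed

lemma vec_angle_polar:
  assumes "r > 0" "\<bar>\<phi> - \<theta>\<bar> \<le> pi"
  shows "vec_angle (r *\<^sub>R (cos \<phi>, sin \<phi>)) (cos \<theta>, sin \<theta>) = \<bar>\<phi> - \<theta>\<bar>"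
proof -
  have unit: "norm (cos t, sin t) = 1" for t :: real
    by (simp add: norm_Pair)
  have "(r *\<^sub>R (cos \<phi>, sin \<phi>)) \<bullet> (cos \<theta>, sin \<theta>) = r * cos (\<phi> - \<theta>)"
    by (simp add: cos_diff algebra_simps)
  moreover have "norm (r *\<^sub>R (cos \<phi>, sin \<phi>)) = r"
    using assms(1) unit by (simp only: norm_scaleR)
  ultimately have "vec_angle (r *\<^sub>R (cos \<phi>, sin \<phi>)) (cos \<theta>, sin \<theta>) = arccos (cos (\<phi> - \<theta>))"
    unfolding vec_angle_def unit using assms(1) by simp
  also have "\<dots> = \<bar>\<phi> - \<theta>\<bar>"
    using assms(2) by (rule arccos_cos_eq_abs)
  finally show ?thesis .
qed

lemma wedge_polar_bounds:
  assumes "\<xi> \<in> wedge N \<alpha> (cos \<theta>, sin \<theta>)" "\<xi> = norm \<xi> *\<^sub>R (cos \<phi>, sin \<phi>)" "\<bar>\<phi> - \<theta>\<bar> \<le> pi"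
  shows "\<xi> \<noteq> 0" "norm \<xi> \<le> real N" "\<bar>\<phi> - \<theta>\<bar> \<le> \<alpha> / sqrt (real N)"
proof -
  have square: "\<xi> \<in> {- real N / 2 .. real N / 2 - 1} \<times> {- real N / 2 .. real N / 2 - 1}"
    and "\<xi> \<noteq> 0" and angle: "vec_angle \<xi> (cos \<theta>, sin \<theta>) \<le> \<alpha> / sqrt (real N)"
    using assms(1) by (auto simp: wedge_def)
  then show "\<xi> \<noteq> 0"
    by simp
  have "norm \<xi> \<le> \<bar>fst \<xi>\<bar> + \<bar>snd \<xi>\<bar>"
    using norm_Pair_le[of "fst \<xi>" "snd \<xi>"] by simp
  also have "\<dots> \<le> real N"
    using square by (cases \<xi>) auto
  finally show "norm \<xi> \<le> real N" .
  have "vec_angle \<xi> (cos \<theta>, sin \<theta>) = \<bar>\<phi> - \<theta>\<bar>"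
    using vec_angle_polar[OF _ assms(3), of "norm \<xi>"] \<open>\<xi> \<noteq> 0\<close> assms(2) by (metis zero_less_norm_iff)
  with angle show "\<bar>\<phi> - \<theta>\<bar> \<le> \<alpha> / sqrt (real N)"
    by simp
qed

theorem theorem2:
  fixes N :: nat and \<alpha> Q R :: real
    and \<Phi> :: "real \<times> real \<Rightarrow> real \<times> real \<Rightarrow> real"
    and \<xi>h :: "real \<times> real"
    and g :: "real \<times> real \<Rightarrow> real \<times> real"
  assumes N: "N > 0" "even N"
    and \<alpha>: "\<alpha> > 0"
    and hom: "\<And>x \<xi> t. x \<in> {0..1} \<times> {0..1} \<Longrightarrow> \<xi> \<noteq> 0 \<Longrightarrow> t > 0 \<Longrightarrow>
                 \<Phi> x (t *\<^sub>R \<xi>) = t * \<Phi> x \<xi>"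
    and unit: "norm \<xi>h = 1"
    and grad: "\<And>x. x \<in> {0..1} \<times> {0..1} \<Longrightarrow>
                 (\<Phi> x has_derivative (\<lambda>h. g x \<bullet> h)) (at \<xi>h)"
    and meas: "\<And>\<xi>. \<xi> \<noteq> 0 \<Longrightarrow>
                 (\<lambda>x. \<Phi> x \<xi> - g x \<bullet> \<xi>) \<in> borel_measurable (lebesgue_on ({0..1} \<times> {0..1}))"
    and QR: "Q > 0" "R > 0"
    and anal: "QR_analytic (\<lambda>x \<xi>. \<Phi> x \<xi> - g x \<bullet> \<xi>) ({0..1} \<times> {0..1}) Q R"
    and adm: "\<alpha> < min (R * sqrt (real N) / 2) (R / sqrt (sqrt 2 * Q))"
  shows "\<forall>p. p > 2 / log 2 (R * sqrt (real N) / \<alpha>) \<longrightarrow>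
           (\<exists>C>0. \<forall>\<epsilon>. 0 < \<epsilon> \<and> \<epsilon> \<le> 1 \<longrightarrow>
              real (sep_rank (\<lambda>x \<xi>. cis (2 * pi * (\<Phi> x \<xi> - g x \<bullet> \<xi>)))
                      ({0..1} \<times> {0..1}) (wedge N \<alpha> \<xi>h) \<epsilon>) \<le> C * \<epsilon> powr (- p))"
proof (intro allI impI)
  fix p
  assume p: "p > 2 / log 2 (R * sqrt (real N) / \<alpha>)"
  have "R * sqrt (real N) / \<alpha> > 1" and angle: "\<alpha> / sqrt (real N) < R / 2"
    using adm \<alpha> N by (auto simp: field_simps)
  then have "2 / log 2 (R * sqrt (real N) / \<alpha>) > 0"
    by simp
  with p have "p > 0"
    by linarith
  obtain \<theta> where \<theta>: "\<xi>h = (cos \<theta>, sin \<theta>)" "0 \<le> \<theta>" "\<theta> < 2 * pi"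
    using unit sincos_total_2pi[of "fst \<xi>h" "snd \<xi>h"] by (cases \<xi>h) (auto simp: norm_Pair)
  obtain \<phi> where \<phi>: "\<And>\<xi>. \<xi> = norm \<xi> *\<^sub>R (cos (\<phi> \<xi>), sin (\<phi> \<xi>))" "\<And>\<xi>. \<bar>\<phi> \<xi> - \<theta>\<bar> \<le> pi"
    using polar_angle_function[OF \<theta>(2,3)] by blast
  note wedge = wedge_polar_bounds[OF _ \<phi>, of _ N \<alpha>, folded \<theta>(1)]
  define h where "h x t = \<Phi> x (cos t, sin t) - g x \<bullet> (cos t, sin t)" for x t
  have approx: "sep_approx (\<lambda>x \<xi>. cis (2 * pi * (\<Phi> x \<xi> - g x \<bullet> \<xi>))) ({0..1} \<times> {0..1}) (wedge N \<alpha> \<xi>h)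
      ((real N * Q + 2 * real N * Q * exp (6 * real N * Q)) / 2 ^ L) ((L + 1) ^ 3)" if "L > 0" for L
  proof (rule sep_approx_cis_polar_phase[where h = h and \<rho> = norm and \<phi> = \<phi> and \<theta> = \<theta>])
    fix x :: "real \<times> real" and \<xi>
    assume x: "x \<in> {0..1} \<times> {0..1}" and \<xi>: "\<xi> \<in> wedge N \<alpha> \<xi>h"
    show "\<Phi> x \<xi> - g x \<bullet> \<xi> = norm \<xi> * h x (\<phi> \<xi>)"
      unfolding h_def by (rule homogeneous_minus_linear_polar[OF hom[OF x] wedge(1)[OF \<xi>] \<phi>(1)])
  next
    fix \<xi>
    assume "\<xi> \<in> wedge N \<alpha> \<xi>h"
    with wedge show "0 \<le> norm \<xi> \<and> norm \<xi> \<le> real N"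
      by simp
    from wedge(3)[OF \<open>\<xi> \<in> wedge N \<alpha> \<xi>h\<close>] angle show "\<bar>\<phi> \<xi> - \<theta>\<bar> \<le> R / 2"
      by linarith
  next
    fix x :: "real \<times> real"
    assume "x \<in> {0..1} \<times> {0..1}"
    then have analytic: "real_analytic_on2 (\<lambda>\<xi>. \<Phi> x \<xi> - g x \<bullet> \<xi>) (- {0})"
      and bound: "\<And>k t. 2 * pi * \<bar>(deriv ^^ k) (h x) t\<bar> \<le> Q * fact k / R ^ k"
      using anal by (auto simp: QR_analytic_def h_def[abs_def])
    show "((deriv ^^ k) (h x) has_real_derivative (deriv ^^ Suc k) (h x) t) (at t)" for k t
      unfolding h_def[abs_def] using analytic by (rule real_analytic_on2_circle_smooth)
    show "2 * pi * \<bar>(deriv ^^ k) (h x) t\<bar> \<le> Q * fact k / R ^ k" for k t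
      by (rule bound)
  qed (use QR that in auto)
  then show "\<exists>C>0. \<forall>\<epsilon>. 0 < \<epsilon> \<and> \<epsilon> \<le> 1 \<longrightarrow>
              real (sep_rank (\<lambda>x \<xi>. cis (2 * pi * (\<Phi> x \<xi> - g x \<bullet> \<xi>)))
                      ({0..1} \<times> {0..1}) (wedge N \<alpha> \<xi>h) \<epsilon>) \<le> C * \<epsilon> powr (- p)"
    by (rule sep_rank_le_powr_of_geometric[OF _ \<open>p > 0\<close>])
qed

end
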